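(* Let $r\ge 3$ and let $G$ be a connected $r$-regular graph. Let $G'$ be the graph with vertex set $V(G)$ in which two distinct vertices are adjacent iff they have a common neighbor in $G$. If $G'$ has a connected component that is a complete graph on $r(r-1)+1$ vertices, then $G$ is the incidence graph of a projective plane of order $r-1$.
   Context: All graphs are finite and simple. A projective plane of order $q$ consists of $q^2+q+1$ points and $q^2+q+1$ lines with an incidence relation such that every line is incident with exactly $q+1$ points, every point with exactly $q+1$ lines, any two distinct points lie on exactly one common line, and any two distinct lines share exactly one common point. Its incidence graph is the bipartite graph whose vertices are the points and the lines, a point being adjacent to a line iff they are incident. *)

theory Defs
  imports Main
begin

definition simple_graph :: "'a set \<Rightarrow> ('a \<Rightarrow> 'a \<Rightarrow> bool) \<Rightarrow> bool" where
  "simple_graph V E \<longleftrightarrow> finite V \<and> (\<forall>u v. E u v \<longrightarrow> u \<in> V \<and> v \<in> V)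
     \<and> (\<forall>u v. E u v \<longrightarrow> E v u) \<and> (\<forall>v. \<not> E v v)"

definition neighbors :: "'a set \<Rightarrow> ('a \<Rightarrow> 'a \<Rightarrow> bool) \<Rightarrow> 'a \<Rightarrow> 'a set" where
  "neighbors V E v = {u \<in> V. E v u}"

definition regular :: "'a set \<Rightarrow> ('a \<Rightarrow> 'a \<Rightarrow> bool) \<Rightarrow> nat \<Rightarrow> bool" where
  "regular V E r \<longleftrightarrow> (\<forall>v\<in>V. card (neighbors V E v) = r)"

definition reachable :: "'a set \<Rightarrow> ('a \<Rightarrow> 'a \<Rightarrow> bool) \<Rightarrow> 'a \<Rightarrow> 'a \<Rightarrow> bool" where
  "reachable V E u v \<longleftrightarrow> u \<in> V \<and> v \<in> V \<and> (\<lambda>x y. x \<in> V \<and> y \<in> V \<and> E x y)\<^sup>*\<^sup>* u v"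

definition connected_graph :: "'a set \<Rightarrow> ('a \<Rightarrow> 'a \<Rightarrow> bool) \<Rightarrow> bool" where
  "connected_graph V E \<longleftrightarrow> V \<noteq> {} \<and> (\<forall>u\<in>V. \<forall>v\<in>V. reachable V E u v)"

definition connected_component :: "'a set \<Rightarrow> ('a \<Rightarrow> 'a \<Rightarrow> bool) \<Rightarrow> 'a set \<Rightarrow> bool" where
  "connected_component V E C \<longleftrightarrow> (\<exists>x\<in>V. C = {y. reachable V E x y})"

definition common_nbr_adj :: "'a set \<Rightarrow> ('a \<Rightarrow> 'a \<Rightarrow> bool) \<Rightarrow> 'a \<Rightarrow> 'a \<Rightarrow> bool" where
  "common_nbr_adj V E u v \<longleftrightarrow> u \<in> V \<and> v \<in> V \<and> u \<noteq> v \<and> (\<exists>w\<in>V. E u w \<and> E w v)"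

definition is_complete_on :: "('a \<Rightarrow> 'a \<Rightarrow> bool) \<Rightarrow> 'a set \<Rightarrow> nat \<Rightarrow> bool" where
  "is_complete_on E C n \<longleftrightarrow> finite C \<and> card C = n \<and> (\<forall>u\<in>C. \<forall>v\<in>C. u \<noteq> v \<longrightarrow> E u v)"

definition projective_plane :: "'p set \<Rightarrow> 'l set \<Rightarrow> ('p \<Rightarrow> 'l \<Rightarrow> bool) \<Rightarrow> nat \<Rightarrow> bool" where
  "projective_plane P L I q \<longleftrightarrow>
     finite P \<and> finite L \<and> card P = q^2 + q + 1 \<and> card L = q^2 + q + 1
     \<and> (\<forall>l\<in>L. card {p\<in>P. I p l} = q + 1)
     \<and> (\<forall>p\<in>P. card {l\<in>L. I p l} = q + 1)
     \<and> (\<forall>p1\<in>P. \<forall>p2\<in>P. p1 \<noteq> p2 \<longrightarrow> (\<exists>!l. l \<in> L \<and> I p1 l \<and> I p2 l))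
     \<and> (\<forall>l1\<in>L. \<forall>l2\<in>L. l1 \<noteq> l2 \<longrightarrow> (\<exists>!p. p \<in> P \<and> I p l1 \<and> I p l2))"

text \<open>Incidence graph: vertices are points (Inl) and lines (Inr).\<close>
definition incidence_vertices :: "'p set \<Rightarrow> 'l set \<Rightarrow> ('p + 'l) set" where
  "incidence_vertices P L = Inl ` P \<union> Inr ` L"

fun incidence_adj :: "'p set \<Rightarrow> 'l set \<Rightarrow> ('p \<Rightarrow> 'l \<Rightarrow> bool) \<Rightarrow> ('p + 'l) \<Rightarrow> ('p + 'l) \<Rightarrow> bool" where
  "incidence_adj P L I (Inl p) (Inr l) = (p \<in> P \<and> l \<in> L \<and> I p l)"
| "incidence_adj P L I (Inr l) (Inl p) = (p \<in> P \<and> l \<in> L \<and> I p l)"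
| "incidence_adj P L I _ _ = False"

definition graph_iso :: "'a set \<Rightarrow> ('a \<Rightarrow> 'a \<Rightarrow> bool) \<Rightarrow> 'b set \<Rightarrow> ('b \<Rightarrow> 'b \<Rightarrow> bool) \<Rightarrow> bool" where
  "graph_iso V E W F \<longleftrightarrow> (\<exists>f. bij_betw f V W \<and> (\<forall>u\<in>V. \<forall>v\<in>V. E u v \<longleftrightarrow> F (f u) (f v)))"

definition is_incidence_graph_of_projective_plane :: "'a set \<Rightarrow> ('a \<Rightarrow> 'a \<Rightarrow> bool) \<Rightarrow> nat \<Rightarrow> bool" where
  "is_incidence_graph_of_projective_plane V E q \<longleftrightarrow>
     (\<exists>(P :: 'a set) (L :: 'a set) I. projective_plane P L I q
        \<and> graph_iso V E (incidence_vertices P L) (incidence_adj P L I))"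

end

theory Submission
  imports Defs "HOL-Combinatorics.Orbits" "HOL-Number_Theory.Cong"
begin

text \<open>
  Let \<open>C\<close> be the complete component of \<open>G'\<close> and \<open>D\<close> the set of neighbours of vertices of \<open>C\<close>.
  Since \<open>C\<close> is closed under distance two, all neighbours of a vertex of \<open>D\<close> lie in \<open>C\<close>.
  In an \<open>r\<close>-regular graph the numbers of common neighbours of a fixed vertex \<open>v\<close> with the
  other vertices add up to \<open>r(r-1)\<close>; as \<open>C - {v}\<close> has exactly that many elements and each of
  them has a common neighbour with \<open>v\<close>, any two vertices of \<open>C\<close> have exactly one common
  neighbour, and the same count then shows that any two vertices of \<open>D\<close> do too.
  If \<open>C\<close> and \<open>D\<close> met, connectivity would give \<open>V = C\<close>, an \<open>r\<close>-regular graph in which any two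
  vertices have exactly one common neighbour. For \<open>r \<ge> 3\<close> this contradicts the friendship
  theorem: for a prime \<open>p\<close> dividing \<open>r - 1\<close>, the number of closed walks of length \<open>p\<close> is
  \<open>1\<close> modulo \<open>p\<close> by the walk-count recurrence, but \<open>0\<close> modulo \<open>p\<close> because rotation acts on
  them without fixed points. So \<open>G\<close> is bipartite with points \<open>C\<close> and lines \<open>D\<close>, and the facts
  above are the axioms of a projective plane of order \<open>r - 1\<close>.
\<close>

section \<open>Maps of prime period without fixed points\<close>

lemma card_orbit_eq_prime_period:
  assumes "prime p" "(f ^^ p) w = w" "f w \<noteq> w"
  shows "card (orbit f w) = p"
proof -
  have p0: "0 < p" using assms(1) prime_gt_0_nat by blast
  have w: "w \<in> orbit f w" using assms(2) p0 by (auto simp: orbit_altdef intro!: exI[of _ p])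
  define d where "d = funpow_dist1 f w w"
  have card_d: "card (orbit f w) = d"
    unfolding d_def orbit_conv_funpow_dist1[OF w]
    by (simp add: card_image inj_on_funpow_dist1[OF w] del: funpow.simps)
  have period: "(f ^^ d) w = w" unfolding d_def by (rule funpow_dist1_prop[OF w])
  then have "(f ^^ (p mod d)) w = w" using assms(2) by (simp add: funpow_mod_eq)
  then have "p mod d = 0"
    using funpow_dist1_least[of "p mod d" f w w] unfolding d_def by fastforce
  moreover have "d \<noteq> 1" using period assms(3) by auto
  ultimately show ?thesis
    using assms(1) card_d by (metis mod_0_imp_dvd prime_nat_iff)
qed

lemma prime_dvd_card_if_fixpoint_free_period:
  assumes "finite W" "prime p" "f ` W \<subseteq> W"
    and "\<And>w. w \<in> W \<Longrightarrow> (f ^^ p) w = w" "\<And>w. w \<in> W \<Longrightarrow> f w \<noteq> w"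
  shows "p dvd card W"
proof -
  have self_in: "w \<in> orbit f w" if "w \<in> W" for w
    using assms(4)[OF that] prime_gt_0_nat[OF assms(2)] by (auto simp: orbit_altdef intro!: exI[of _ p])
  have orbit_eq: "orbit f y = orbit f w" if "w \<in> W" "y \<in> orbit f w" for w y
    using that self_in by (meson orbit_swap orbit_trans subsetI subset_antisym)
  have "orbit f w \<subseteq> W" if "w \<in> W" for w
  proof
    fix y assume "y \<in> orbit f w"
    then show "y \<in> W" by induction (use assms(3) that in auto)
  qed
  then have W: "W = \<Union> (orbit f ` W)" using self_in by blast
  show ?thesis
  proof (subst W, rule dvd_partition)
    show "finite (\<Union> (orbit f ` W))" using W assms(1) by simp
    show "\<forall>c\<in>orbit f ` W. p dvd card c"
      by (auto simp: card_orbit_eq_prime_period[OF assms(2)] assms(4,5))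
    show "\<forall>c1\<in>orbit f ` W. \<forall>c2\<in>orbit f ` W. c1 \<noteq> c2 \<longrightarrow> c1 \<inter> c2 = {}"
      using orbit_eq by blast
  qed
qed

lemma sum_sum_filter_swap:
  assumes "finite A" "finite B"
  shows "(\<Sum>a\<in>A. \<Sum>b\<in>{b\<in>B. R a b}. f b) = (\<Sum>b\<in>B. card {a\<in>A. R a b} * f b)"
  unfolding sum.swap_restrict[OF assms] by simp

lemma eq_1_if_sum_le_card:
  fixes f :: "'a \<Rightarrow> nat"
  assumes "finite A" "\<And>x. x \<in> A \<Longrightarrow> 1 \<le> f x" "sum f A \<le> card A" "x \<in> A"
  shows "f x = 1"
proof (rule ccontr)
  assume "f x \<noteq> 1"
  then have "1 < f x" using assms(2)[OF assms(4)] by simp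
  then have "(\<Sum>_\<in>A. 1) < sum f A"
    by (intro sum_strict_mono_ex1) (use assms in \<open>auto intro!: bexI[of _ x]\<close>)
  then show False using assms(3) by simp
qed

lemma eq_1_if_card_le_sum:
  fixes f :: "'a \<Rightarrow> nat"
  assumes "finite A" "\<And>x. x \<in> A \<Longrightarrow> f x \<le> 1" "card A \<le> sum f A" "x \<in> A"
  shows "f x = 1"
proof (rule ccontr)
  assume "f x \<noteq> 1"
  then have "f x < 1" using assms(2)[OF assms(4)] by simp
  then have "sum f A < (\<Sum>_\<in>A. 1)"
    by (intro sum_strict_mono_ex1) (use assms in \<open>auto intro!: bexI[of _ x]\<close>)
  then show False using assms(3) by simp
qed

lemma ex1_if_card_eq_1:
  assumes "card {x\<in>A. P x} = 1" shows "\<exists>!x. x \<in> A \<and> P x"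
proof -
  obtain a where "{x\<in>A. P x} = {a}" using card_1_singletonE[OF assms] .
  then have "x \<in> A \<and> P x \<longleftrightarrow> x = a" for x by blast
  then show ?thesis by (intro ex1I[of _ a]) (simp_all only:)
qed

lemma connected_graph_closed_subset:
  assumes "connected_graph V E" "s \<in> V" "s \<in> S" "\<And>x y. x \<in> S \<Longrightarrow> E x y \<Longrightarrow> y \<in> S"
  shows "V \<subseteq> S"
proof
  fix v assume "v \<in> V"
  then have "(\<lambda>x y. x \<in> V \<and> y \<in> V \<and> E x y)\<^sup>*\<^sup>* s v"
    using assms(1,2) unfolding connected_graph_def reachable_def by blast
  then show "v \<in> S" by induction (use assms(3,4) in blast)+
qed

lemma connected_component_subset: "connected_component V F C \<Longrightarrow> C \<subseteq> V"
  unfolding connected_component_def reachable_def by blast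

lemma connected_component_closed:
  assumes "connected_component V F C" "v \<in> C" "F v u" "u \<in> V"
  shows "u \<in> C"
proof -
  obtain x where "x \<in> V" "C = {y. reachable V F x y}"
    using assms(1) unfolding connected_component_def by blast
  then show ?thesis
    using assms(2-4) unfolding reachable_def by (auto intro: rtranclp.rtrancl_into_rtrancl)
qed

lemma graph_iso_incidence_graph:
  assumes "simple_graph V E" "V = C \<union> D" "C \<inter> D = {}"
    and bipartite: "\<And>u v. E u v \<Longrightarrow> u \<in> C \<longleftrightarrow> v \<in> D"
  shows "graph_iso V E (incidence_vertices C D) (incidence_adj C D E)"
proof -
  define f where "f v = (if v \<in> C then Inl v else Inr v)" for v :: 'a
  have "bij_betw f V (incidence_vertices C D)"
    by (rule bij_betwI') (use assms(2,3) in \<open>auto simp: f_def incidence_vertices_def\<close>)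
  moreover have "E u v \<longleftrightarrow> incidence_adj C D E (f u) (f v)" if "u \<in> V" "v \<in> V" for u v
  proof -
    have sym: "E u v \<longleftrightarrow> E v u" using assms(1) unfolding simple_graph_def by blast
    from that assms(2) consider "u \<in> C" "v \<in> C" | "u \<in> C" "v \<in> D" | "u \<in> D" "v \<in> C" | "u \<in> D" "v \<in> D"
      by blast
    then show ?thesis
    proof cases
      case 1
      then have "\<not> E u v" using bipartite[of u v] assms(3) by blast
      with 1 show ?thesis by (simp add: f_def)
    next
      case 2
      with assms(3) show ?thesis by (auto simp: f_def)
    next
      case 3
      with assms(3) sym show ?thesis by (auto simp: f_def)
    next
      case 4
      then have "\<not> E u v" using bipartite[of u v] assms(3) by blast
      with 4 assms(3) show ?thesis by (auto simp: f_def)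
    qed
  qed
  ultimately show ?thesis unfolding graph_iso_def by blast
qed

definition common_neighbors :: "'a set \<Rightarrow> ('a \<Rightarrow> 'a \<Rightarrow> bool) \<Rightarrow> 'a \<Rightarrow> 'a \<Rightarrow> 'a set" where
  "common_neighbors V E u v = neighbors V E u \<inter> neighbors V E v"

section \<open>Walks in regular graphs\<close>

text \<open>A walk \<open>u, x\<^sub>1, \<dots>, x\<^sub>n = v\<close> is recorded by the list \<open>[x\<^sub>1, \<dots>, x\<^sub>n]\<close> of the vertices after \<open>u\<close>.\<close>

definition walks :: "('a \<Rightarrow> 'a \<Rightarrow> bool) \<Rightarrow> nat \<Rightarrow> 'a \<Rightarrow> 'a \<Rightarrow> 'a list set" where
  "walks E n u v = {xs. length xs = n \<and> successively E (u # xs) \<and> last (u # xs) = v}"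

text \<open>
  A closed walk \<open>x\<^sub>1, \<dots>, x\<^sub>n, x\<^sub>1\<close> is recorded without repeating \<open>x\<^sub>1\<close>, so that its cyclic
  shifts are again closed walks. Only \<open>n \<ge> 1\<close> is meaningful (\<open>hd []\<close> and \<open>last []\<close> are junk).
\<close>

definition closed_walks :: "('a \<Rightarrow> 'a \<Rightarrow> bool) \<Rightarrow> nat \<Rightarrow> 'a list set" where
  "closed_walks E n = {xs. length xs = n \<and> successively E xs \<and> E (last xs) (hd xs)}"

lemma card_walks_0: "card (walks E 0 u v) = of_bool (u = v)"
  by (simp add: walks_def)

lemma walks_Suc: "walks E (Suc n) u v = (\<Union>w\<in>{w. E u w}. Cons w ` walks E n w v)"
  by (auto simp: walks_def length_Suc_conv image_iff)

lemma rotate1_closed_walk: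
  assumes "xs \<in> closed_walks E n" "2 \<le> n" "\<And>v. \<not> E v v"
  shows "rotate1 xs \<in> closed_walks E n" "rotate1 xs \<noteq> xs"
proof -
  have "length xs \<ge> 2" using assms(1,2) by (simp add: closed_walks_def)
  then obtain x ys where xs: "xs = x # ys" and ys: "ys \<noteq> []"
    by (cases xs) (auto simp: Suc_le_length_iff)
  then show "rotate1 xs \<in> closed_walks E n"
    using assms(1) by (auto simp: closed_walks_def successively_Cons successively_append_iff)
  have "E x (hd ys)" using assms(1) xs ys by (simp add: closed_walks_def successively_Cons)
  then show "rotate1 xs \<noteq> xs" using xs ys assms(3) by (cases ys) auto
qed

lemma prime_dvd_card_closed_walks:
  assumes "finite (closed_walks E p)" "prime p" "\<And>v. \<not> E v v"
  shows "p dvd card (closed_walks E p)"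
proof (rule prime_dvd_card_if_fixpoint_free_period[where f = rotate1])
  have "2 \<le> p" using assms(2) prime_ge_2_nat by blast
  then show "rotate1 ` closed_walks E p \<subseteq> closed_walks E p"
    and "\<And>xs. xs \<in> closed_walks E p \<Longrightarrow> rotate1 xs \<noteq> xs"
    using rotate1_closed_walk assms(3) by blast+
  show "\<And>xs. xs \<in> closed_walks E p \<Longrightarrow> (rotate1 ^^ p) xs = xs"
    by (simp add: closed_walks_def rotate_def[symmetric])
qed (use assms in auto)

locale regular_graph =
  fixes V :: "'a set" and E :: "'a \<Rightarrow> 'a \<Rightarrow> bool" and r :: nat
  assumes simple: "simple_graph V E" and regular: "regular V E r"

context regular_graph
begin

lemma finite_V: "finite V"
  and adj_in_V: "E u v \<Longrightarrow> u \<in> V \<and> v \<in> V"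
  and adj_sym: "E u v \<Longrightarrow> E v u"
  and adj_irrefl: "\<not> E v v"
  using simple unfolding simple_graph_def by auto

lemma card_neighbors: "v \<in> V \<Longrightarrow> card (neighbors V E v) = r"
  using regular unfolding regular_def by auto

lemma card_neighbors_in:
  assumes "v \<in> V" shows "card {u\<in>V. E u v} = r"
proof -
  have "{u\<in>V. E u v} = neighbors V E v" unfolding neighbors_def using adj_sym by blast
  then show ?thesis using card_neighbors[OF assms] by simp
qed

lemma finite_neighbors: "finite (neighbors V E v)"
  using finite_V unfolding neighbors_def by auto

lemma neighbors_eq: "neighbors V E v = {w. E v w}"
  unfolding neighbors_def using adj_in_V by auto

lemma common_neighbors_eq: "common_neighbors V E u v = {w\<in>neighbors V E u. E w v}"
  unfolding common_neighbors_def neighbors_def using adj_sym by auto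

lemma common_neighbors_self: "common_neighbors V E v v = neighbors V E v"
  unfolding common_neighbors_def by simp

lemma walks_subset_lists: "walks E n u v \<subseteq> {xs. set xs \<subseteq> V \<and> length xs = n}"
proof -
  have "set xs \<subseteq> V" if "successively E (u # xs)" for xs
    using that by (induction xs arbitrary: u) (auto simp: successively_Cons dest: adj_in_V)
  then show ?thesis unfolding walks_def by blast
qed

lemma finite_walks: "finite (walks E n u v)"
  using finite_subset[OF walks_subset_lists finite_lists_length_eq[OF finite_V]] .

lemma card_walks_Suc: "card (walks E (Suc n) u v) = (\<Sum>w\<in>neighbors V E u. card (walks E n w v))"
  unfolding walks_Suc neighbors_eq[symmetric]
  by (subst card_UN_disjoint) (auto simp: finite_neighbors finite_walks card_image)

lemma card_walks_Suc_Suc: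
  "card (walks E (Suc (Suc n)) u v) = (\<Sum>x\<in>V. card (common_neighbors V E u x) * card (walks E n x v))"
proof -
  have "card (walks E (Suc (Suc n)) u v)
      = (\<Sum>w\<in>neighbors V E u. \<Sum>x\<in>{x\<in>V. E w x}. card (walks E n x v))"
    by (simp add: card_walks_Suc neighbors_def)
  also have "\<dots> = (\<Sum>x\<in>V. card (common_neighbors V E u x) * card (walks E n x v))"
    by (simp add: sum_sum_filter_swap finite_neighbors finite_V common_neighbors_eq)
  finally show ?thesis .
qed

lemma sum_card_walks: "v \<in> V \<Longrightarrow> (\<Sum>u\<in>V. card (walks E n u v)) = r ^ n"
proof (induction n)
  case 0
  then show ?case using finite_V by (simp add: card_walks_0 Int_def Collect_conv_if)
next
  case (Suc n)
  have "(\<Sum>u\<in>V. card (walks E (Suc n) u v)) = (\<Sum>u\<in>V. \<Sum>w\<in>{w\<in>V. E u w}. card (walks E n w v))"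
    by (simp add: card_walks_Suc neighbors_def)
  also have "\<dots> = (\<Sum>w\<in>V. card {u\<in>V. E u w} * card (walks E n w v))"
    by (rule sum_sum_filter_swap[OF finite_V finite_V])
  also have "\<dots> = (\<Sum>w\<in>V. r * card (walks E n w v))"
    by (intro sum.cong refl) (simp add: card_neighbors_in)
  also have "\<dots> = r ^ Suc n" using Suc by (simp add: sum_distrib_left[symmetric])
  finally show ?case .
qed

lemma card_walks_2: "card (walks E 2 u v) = card (common_neighbors V E u v)"
proof -
  have "card (walks E 2 u v) = (\<Sum>x\<in>V. card (common_neighbors V E u x) * of_bool (x = v))"
    using card_walks_Suc_Suc[of 0] by (simp add: numeral_2_eq_2 card_walks_0)
  also have "\<dots> = card (common_neighbors V E u v)"
    using finite_V adj_in_V by (auto simp: Int_def Collect_conv_if common_neighbors_def neighbors_def)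
  finally show ?thesis .
qed

lemma sum_card_common_neighbors:
  assumes "v \<in> V"
  shows "(\<Sum>u\<in>V - {v}. card (common_neighbors V E u v)) = r * (r - 1)"
proof -
  have "r * r = (\<Sum>u\<in>V. card (common_neighbors V E u v))"
    using sum_card_walks[OF assms, of 2] by (simp add: card_walks_2 power2_eq_square)
  also have "\<dots> = r + (\<Sum>u\<in>V - {v}. card (common_neighbors V E u v))"
    using assms finite_V by (simp add: sum.remove common_neighbors_self card_neighbors)
  finally show ?thesis by (simp add: right_diff_distrib')
qed

lemma closed_walks_eq_UN_walks:
  assumes "n \<ge> 1"
  shows "closed_walks E n = (\<Union>u\<in>V. walks E n u u)"
proof (intro equalityI subsetI)
  fix xs assume xs: "xs \<in> closed_walks E n"
  then have "xs \<noteq> []" using assms by (auto simp: closed_walks_def)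
  then show "xs \<in> (\<Union>u\<in>V. walks E n u u)"
    using xs adj_in_V
    by (auto simp: closed_walks_def walks_def successively_Cons intro!: bexI[of _ "last xs"])
next
  fix xs assume "xs \<in> (\<Union>u\<in>V. walks E n u u)"
  moreover have "xs \<noteq> []" if "length xs = n" for xs using that assms by auto
  ultimately show "xs \<in> closed_walks E n"
    by (auto simp: closed_walks_def walks_def successively_Cons)
qed

lemma finite_closed_walks: "n \<ge> 1 \<Longrightarrow> finite (closed_walks E n)"
  by (simp add: closed_walks_eq_UN_walks finite_V finite_walks)

lemma card_closed_walks:
  assumes "n \<ge> 1"
  shows "card (closed_walks E n) = (\<Sum>u\<in>V. card (walks E n u u))"
  unfolding closed_walks_eq_UN_walks[OF assms]
proof (rule card_UN_disjoint[OF finite_V])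
  show "\<forall>i\<in>V. \<forall>j\<in>V. i \<noteq> j \<longrightarrow> walks E n i i \<inter> walks E n j j = {}"
    using assms by (auto simp: walks_def split: if_splits)
qed (simp add: finite_walks)

section \<open>The friendship property fails in regular graphs of degree at least 3\<close>

lemma friendship_closed_walks_recurrence:
  assumes friendship: "\<And>u v. u \<in> V \<Longrightarrow> v \<in> V \<Longrightarrow> u \<noteq> v \<Longrightarrow> card (common_neighbors V E u v) = 1"
    and "v \<in> V"
  shows "card (walks E (Suc (Suc n)) v v) + card (walks E n v v) = r * card (walks E n v v) + r ^ n"
proof -
  let ?w = "\<lambda>x. card (walks E n x v)"
  have "card (walks E (Suc (Suc n)) v v) = (\<Sum>x\<in>V. card (common_neighbors V E v x) * ?w x)"
    by (rule card_walks_Suc_Suc)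
  also have "\<dots> = r * ?w v + (\<Sum>x\<in>V - {v}. card (common_neighbors V E v x) * ?w x)"
    using assms finite_V by (simp add: sum.remove common_neighbors_self card_neighbors)
  also have "(\<Sum>x\<in>V - {v}. card (common_neighbors V E v x) * ?w x) = (\<Sum>x\<in>V - {v}. ?w x)"
    using assms by (intro sum.cong) auto
  finally show ?thesis
    using sum.remove[OF finite_V assms(2), of ?w] sum_card_walks[OF assms(2), of n] by simp
qed

theorem no_regular_friendship_graph:
  assumes "r \<ge> 3" "V \<noteq> {}"
    and friendship: "\<And>u v. u \<in> V \<Longrightarrow> v \<in> V \<Longrightarrow> u \<noteq> v \<Longrightarrow> card (common_neighbors V E u v) = 1"
  shows False
proof -
  have "r - 1 \<noteq> 1" using assms(1) by simp
  then obtain p where p: "prime p" "p dvd r - 1" using prime_factor_nat by blast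
  then have r_cong: "[r = 1] (mod p)" using assms(1) by (simp add: cong_altdef_nat)
  have p2: "p = Suc (Suc (p - 2))" using prime_ge_2_nat[OF p(1)] by simp
  have closed: "[card (walks E p v v) = 1] (mod p)" if "v \<in> V" for v
  proof -
    let ?c = "card (walks E (p - 2) v v)"
    have "card (walks E (Suc (Suc (p - 2))) v v) + ?c = r * ?c + r ^ (p - 2)"
      by (rule friendship_closed_walks_recurrence[OF friendship that])
    then have "card (walks E p v v) + ?c = r * ?c + r ^ (p - 2)"
      by (simp only: p2[symmetric])
    then have "[card (walks E p v v) + ?c = r * ?c + r ^ (p - 2)] (mod p)" by simp
    moreover have "[r * ?c + r ^ (p - 2) = 1 + ?c] (mod p)"
      using cong_add[OF cong_scalar_right[OF r_cong] cong_pow[OF r_cong]] by simp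
    ultimately have "[card (walks E p v v) + ?c = 1 + ?c] (mod p)" by (rule cong_trans)
    then show ?thesis by (simp only: cong_add_rcancel_nat)
  qed
  obtain v where v: "v \<in> V" using assms(2) by blast
  have "card V - 1 = r * (r - 1)"
    using sum_card_common_neighbors[OF v] friendship v finite_V by simp
  moreover have "card V > 0" using v finite_V card_gt_0_iff by blast
  ultimately have "[card V = 1] (mod p)" using p(2) by (simp add: cong_altdef_nat Suc_le_eq)
  moreover have "[card (closed_walks E p) = card V] (mod p)"
    using card_closed_walks[of p] cong_sum[of V "\<lambda>v. card (walks E p v v)" "\<lambda>_. 1" p] closed p2
    by simp
  moreover have "[card (closed_walks E p) = 0] (mod p)"
    using prime_dvd_card_closed_walks[OF finite_closed_walks p(1) adj_irrefl] p2 by (simp add: cong_0_iff)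
  ultimately have "[0 = 1] (mod p)" by (metis cong_sym cong_trans)
  then show False using p(1) by (simp add: cong_0_1_nat')
qed

section \<open>Points and lines\<close>

lemma card_common_neighbors_eq_1_if_dense:
  assumes "C \<subseteq> V" "card C = r * (r - 1) + 1" "v \<in> C"
    and dense: "\<And>x. x \<in> C \<Longrightarrow> x \<noteq> v \<Longrightarrow> common_neighbors V E x v \<noteq> {}"
    and "x \<in> C" "x \<noteq> v"
  shows "card (common_neighbors V E x v) = 1"
proof (rule eq_1_if_sum_le_card[where A = "C - {v}" and f = "\<lambda>y. card (common_neighbors V E y v)"])
  have "finite C" using assms(1) finite_V finite_subset by blast
  then show "finite (C - {v})" by simp
  show "1 \<le> card (common_neighbors V E y v)" if "y \<in> C - {v}" for y
    using dense[of y] that finite_V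
    by (simp add: Suc_le_eq card_gt_0_iff common_neighbors_def finite_neighbors)
  have "(\<Sum>y\<in>C - {v}. card (common_neighbors V E y v)) \<le> (\<Sum>y\<in>V - {v}. card (common_neighbors V E y v))"
    using assms(1) finite_V by (intro sum_mono2) auto
  also have "\<dots> = card (C - {v})"
    using sum_card_common_neighbors assms(1-3) \<open>finite C\<close> by auto
  finally show "(\<Sum>y\<in>C - {v}. card (common_neighbors V E y v)) \<le> card (C - {v})" .
qed (use assms in auto)

lemma card_common_neighbors_le_1_dual:
  assumes "neighbors V E l \<subseteq> C"
    and unique: "\<And>p q. p \<in> C \<Longrightarrow> q \<in> C \<Longrightarrow> p \<noteq> q \<Longrightarrow> card (common_neighbors V E p q) = 1"
    and "k \<noteq> l"
  shows "card (common_neighbors V E k l) \<le> 1"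
proof (rule ccontr)
  assume "\<not> card (common_neighbors V E k l) \<le> 1"
  then obtain p q where pq: "p \<in> common_neighbors V E k l" "q \<in> common_neighbors V E k l" "p \<noteq> q"
    using card_le_Suc0_iff_eq[of "common_neighbors V E k l"] finite_neighbors
    by (auto simp: common_neighbors_def)
  then have "p \<in> C" "q \<in> C" using assms(1) by (auto simp: common_neighbors_def)
  moreover have "{k, l} \<subseteq> common_neighbors V E p q"
    using pq adj_sym adj_in_V by (auto simp: common_neighbors_def neighbors_def)
  then have "2 \<le> card (common_neighbors V E p q)"
    using assms(3) card_mono[OF _ \<open>{k, l} \<subseteq> _\<close>] finite_neighbors by (auto simp: common_neighbors_def)
  ultimately show False using unique \<open>p \<noteq> q\<close> by fastforce
qed

lemma card_common_neighbors_eq_1_dual: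
  assumes "D \<subseteq> V" "card D = r * (r - 1) + 1"
    and C_to_D: "\<And>c. c \<in> C \<Longrightarrow> neighbors V E c \<subseteq> D"
    and D_to_C: "\<And>d. d \<in> D \<Longrightarrow> neighbors V E d \<subseteq> C"
    and unique: "\<And>p q. p \<in> C \<Longrightarrow> q \<in> C \<Longrightarrow> p \<noteq> q \<Longrightarrow> card (common_neighbors V E p q) = 1"
    and "l \<in> D" "m \<in> D" "m \<noteq> l"
  shows "card (common_neighbors V E m l) = 1"
proof (rule eq_1_if_card_le_sum[where A = "D - {l}" and f = "\<lambda>m. card (common_neighbors V E m l)"])
  have "finite D" using assms(1) finite_V finite_subset by blast
  then show "finite (D - {l})" by simp
  show "card (common_neighbors V E k l) \<le> 1" if "k \<in> D - {l}" for k
    using card_common_neighbors_le_1_dual[OF D_to_C[OF \<open>l \<in> D\<close>] unique] that by blast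
  have "card (D - {l}) = (\<Sum>k\<in>V - {l}. card (common_neighbors V E k l))"
    using sum_card_common_neighbors assms(1,2,6) \<open>finite D\<close> by auto
  also have "\<dots> = (\<Sum>k\<in>D - {l}. card (common_neighbors V E k l))"
  proof (rule sum.mono_neutral_right)
    show "\<forall>k\<in>(V - {l}) - (D - {l}). card (common_neighbors V E k l) = 0"
    proof
      fix k assume k: "k \<in> (V - {l}) - (D - {l})"
      have "common_neighbors V E k l = {}"
      proof (rule ccontr)
        assume "common_neighbors V E k l \<noteq> {}"
        then obtain w where "w \<in> neighbors V E l" "E k w" by (auto simp: common_neighbors_def neighbors_def)
        then have "k \<in> neighbors V E w" "w \<in> C"
          using k adj_sym D_to_C[OF \<open>l \<in> D\<close>] by (auto simp: neighbors_def)
        then show False using k C_to_D by blast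
      qed
      then show "card (common_neighbors V E k l) = 0" by simp
    qed
  qed (use finite_V assms(1) in auto)
  finally show "card (D - {l}) \<le> (\<Sum>k\<in>D - {l}. card (common_neighbors V E k l))" by simp
qed (use assms in auto)

lemma card_eq_if_bipartite:
  assumes "0 < r" "C \<subseteq> V" "D \<subseteq> V"
    and C_to_D: "\<And>c. c \<in> C \<Longrightarrow> neighbors V E c \<subseteq> D"
    and D_to_C: "\<And>d. d \<in> D \<Longrightarrow> neighbors V E d \<subseteq> C"
  shows "card C = card D"
proof -
  have fin: "finite C" "finite D" using assms(2,3) finite_V finite_subset by blast+
  have "{d\<in>D. E c d} = neighbors V E c" if "c \<in> C" for c
    using C_to_D[OF that] assms(3) by (auto simp: neighbors_def)
  then have "r * card C = (\<Sum>c\<in>C. card {d\<in>D. E c d})"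
    using assms(2) card_neighbors by (auto simp: subset_iff)
  also have "\<dots> = (\<Sum>d\<in>D. card {c\<in>C. E c d})"
    using sum_sum_filter_swap[OF fin, where R = E and f = "\<lambda>_. 1"] by simp
  also have "{c\<in>C. E c d} = neighbors V E d" if "d \<in> D" for d
    using D_to_C[OF that] adj_sym assms(2) by (auto simp: neighbors_def)
  then have "(\<Sum>d\<in>D. card {c\<in>C. E c d}) = r * card D"
    using assms(3) card_neighbors by (auto simp: subset_iff)
  finally show ?thesis using assms(1) by simp
qed

lemma is_incidence_graph_of_projective_plane_if_bipartite:
  assumes "1 \<le> r" "V = C \<union> D" "C \<inter> D = {}"
    and C_to_D: "\<And>c. c \<in> C \<Longrightarrow> neighbors V E c \<subseteq> D"
    and D_to_C: "\<And>d. d \<in> D \<Longrightarrow> neighbors V E d \<subseteq> C"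
    and card_C: "card C = r * (r - 1) + 1"
    and unique: "\<And>p q. p \<in> C \<Longrightarrow> q \<in> C \<Longrightarrow> p \<noteq> q \<Longrightarrow> card (common_neighbors V E p q) = 1"
  shows "is_incidence_graph_of_projective_plane V E (r - 1)"
proof -
  have CD: "C \<subseteq> V" "D \<subseteq> V" "finite C" "finite D"
    using assms(2) finite_V finite_subset by auto
  have card_D: "card D = r * (r - 1) + 1"
    using card_eq_if_bipartite[OF _ CD(1,2) C_to_D D_to_C] assms(1) card_C by simp
  have adj: "u \<in> C \<longleftrightarrow> v \<in> D" if "E u v" for u v
  proof -
    have "v \<in> neighbors V E u" "u \<in> neighbors V E v"
      using that adj_in_V adj_sym by (auto simp: neighbors_def)
    then show ?thesis using C_to_D D_to_C assms(2,3) adj_in_V[OF that] by blast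
  qed
  have lines_of_point: "{l\<in>D. E p l} = neighbors V E p" if "p \<in> C" for p
    using adj that adj_in_V by (auto simp: neighbors_def)
  have points_of_line: "{p\<in>C. E p l} = neighbors V E l" if "l \<in> D" for l
    using D_to_C[OF that] adj_in_V adj_sym by (auto simp: neighbors_def)
  have "common_neighbors V E p q = {l\<in>D. E p l \<and> E q l}" if "p \<in> C" for p q
    using adj that adj_in_V adj_sym by (auto simp: common_neighbors_def neighbors_def)
  then have line_unique: "\<exists>!l. l \<in> D \<and> E p l \<and> E q l" if "p \<in> C" "q \<in> C" "p \<noteq> q" for p q
    using unique[OF that] that by (intro ex1_if_card_eq_1) simp
  have "common_neighbors V E m l = {p\<in>C. E p l \<and> E p m}" if "l \<in> D" for l m
    using D_to_C[OF that] adj_in_V adj_sym by (auto simp: common_neighbors_def neighbors_def)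
  then have point_unique: "\<exists>!p. p \<in> C \<and> E p l \<and> E p m" if "l \<in> D" "m \<in> D" "l \<noteq> m" for l m
    using card_common_neighbors_eq_1_dual[OF CD(2) card_D C_to_D D_to_C unique] that
    by (intro ex1_if_card_eq_1) simp
  have "(r - 1)\<^sup>2 + (r - 1) + 1 = r * (r - 1) + 1"
    using assms(1) by (cases r) (simp_all add: power2_eq_square)
  then have "projective_plane C D E (r - 1)"
    unfolding projective_plane_def
    using CD card_C card_D lines_of_point points_of_line card_neighbors assms(1)
      line_unique point_unique by auto
  moreover have "graph_iso V E (incidence_vertices C D) (incidence_adj C D E)"
    by (rule graph_iso_incidence_graph[OF simple assms(2,3) adj])
  ultimately show ?thesis unfolding is_incidence_graph_of_projective_plane_def by blast
qed

theorem is_incidence_graph_of_projective_plane_if_complete_component: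
  assumes "3 \<le> r" "connected_graph V E"
    and component: "connected_component V (common_nbr_adj V E) C"
    and complete: "is_complete_on (common_nbr_adj V E) C (r * (r - 1) + 1)"
  shows "is_incidence_graph_of_projective_plane V E (r - 1)"
proof -
  have CV: "C \<subseteq> V" by (rule connected_component_subset[OF component])
  have card_C: "card C = r * (r - 1) + 1" using complete by (simp add: is_complete_on_def)
  then obtain c0 where c0: "c0 \<in> C" by fastforce
  have two_step: "y \<in> C" if "c \<in> C" "E c w" "E w y" for c w y
  proof (cases "y = c")
    case False
    then have "common_nbr_adj V E c y" using that CV adj_in_V by (auto simp: common_nbr_adj_def)
    then show ?thesis using connected_component_closed[OF component that(1)] adj_in_V[OF that(3)] by blast
  qed (use that in simp)
  have unique: "card (common_neighbors V E p q) = 1" if "p \<in> C" "q \<in> C" "p \<noteq> q" for p q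
  proof (rule card_common_neighbors_eq_1_if_dense[OF CV card_C that(2) _ that(1,3)])
    fix x assume "x \<in> C" "x \<noteq> q"
    then have "common_nbr_adj V E x q" using complete \<open>q \<in> C\<close> unfolding is_complete_on_def by blast
    then obtain w where "w \<in> V" "E x w" "E w q" unfolding common_nbr_adj_def by blast
    then have "w \<in> common_neighbors V E x q" using adj_sym by (simp add: common_neighbors_def neighbors_def)
    then show "common_neighbors V E x q \<noteq> {}" by blast
  qed
  define D where "D = {w. \<exists>c\<in>C. E c w}"
  have C_to_D: "neighbors V E c \<subseteq> D" if "c \<in> C" for c
    using that by (auto simp: D_def neighbors_def)
  have D_to_C: "neighbors V E d \<subseteq> C" if "d \<in> D" for d
    using that two_step by (auto simp: D_def neighbors_def)
  have closed_Un: "y \<in> C \<union> D" if "x \<in> C \<union> D" "E x y" for x y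
    using C_to_D D_to_C that by (auto simp: neighbors_eq)
  have closed_Int: "y \<in> C \<inter> D" if "x \<in> C \<inter> D" "E x y" for x y
    using C_to_D D_to_C that by (auto simp: neighbors_eq)
  have "C \<inter> D = {}"
  proof (rule ccontr)
    assume "C \<inter> D \<noteq> {}"
    then obtain t where t: "t \<in> C \<inter> D" by blast
    have "t \<in> V" using t CV by blast
    then have "V \<subseteq> C \<inter> D" by (rule connected_graph_closed_subset[OF assms(2) _ t closed_Int])
    then have "V = C" using CV by blast
    show False by (rule no_regular_friendship_graph[OF assms(1)]) (use \<open>V = C\<close> c0 unique in auto)
  qed
  moreover have "c0 \<in> V" "c0 \<in> C \<union> D" using c0 CV by blast+
  then have "V \<subseteq> C \<union> D" by (rule connected_graph_closed_subset[OF assms(2) _ _ closed_Un])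
  then have "V = C \<union> D" using CV adj_in_V by (auto simp: D_def)
  ultimately show ?thesis
    using is_incidence_graph_of_projective_plane_if_bipartite C_to_D D_to_C card_C unique assms(1)
    by simp
qed

end

theorem mainTheorem2:
  fixes V :: "'a set" and E :: "'a \<Rightarrow> 'a \<Rightarrow> bool" and r :: nat
  assumes "r \<ge> 3"
    and "simple_graph V E"
    and "connected_graph V E"
    and "regular V E r"
    and "\<exists>C. connected_component V (common_nbr_adj V E) C
              \<and> is_complete_on (common_nbr_adj V E) C (r * (r - 1) + 1)"
  shows "is_incidence_graph_of_projective_plane V E (r - 1)"
proof -
  interpret regular_graph V E r using assms(2,4) by unfold_locales
  from assms(5) obtain C where "connected_component V (common_nbr_adj V E) C"
    and "is_complete_on (common_nbr_adj V E) C (r * (r - 1) + 1)" by blast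
  then show ?thesis
    by (rule is_incidence_graph_of_projective_plane_if_complete_component[OF assms(1,3)])
qed

end
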